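(* Let $k\ge 2$ and $2\le r\le k$ be integers, let $T=3^{k-r+1}$ and $M=3^{r-1}$, and let $S=(\mathcal{P},\mathcal{B})$ be a Steiner triple system on $|\mathcal{P}|=3^k$ points whose $3$-rank is at most $3^k-r$. Fix a decomposition of $S$ of the form described in the context (groups $G_x$, $x\in AG(r-1,3)$, sub-systems $\mathcal{B}_x$ and transversal designs $\mathcal{B}_\ell$). Suppose that (i) for every point $x$ of $AG(r-1,3)$, the Steiner triple system $(G_x,\mathcal{B}_x)$ on $T$ points is resolvable, and (ii) for every line $\ell$ of $AG(r-1,3)$, the Latin square of order $T$ corresponding to the transversal design $\mathcal{B}_\ell$ has an orthogonal mate. Then $S$ is resolvable, i.e. $\mathcal{B}$ can be partitioned into $\frac{3^k-1}{2}$ parallel classes.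
   Context: A Steiner triple system $STS(v)$ is a pair $(\mathcal{P},\mathcal{B})$ with $|\mathcal{P}|=v$ and $\mathcal{B}$ a set of $3$-subsets (blocks) of $\mathcal{P}$ such that every $2$-subset of $\mathcal{P}$ lies in exactly one block. Its $3$-rank is the rank over $\mathbb{F}_3$ of its block–point incidence matrix. A parallel class is a subset of $\mathcal{B}$ whose blocks partition $\mathcal{P}$; $S$ is resolvable if $\mathcal{B}$ can be partitioned into parallel classes. A transversal design $TD[3;T]$ on three pairwise disjoint groups $H_1,H_2,H_3$ of size $T$ is a set of $T^2$ triples $\{a,b,c\}$ with $a\in H_1,b\in H_2,c\in H_3$ such that every pair of points from two distinct groups lies in exactly one triple; equivalently it is a Latin square of order $T$ (rows indexed by $H_1$, columns by $H_2$, symbols by $H_3$). Two Latin squares of order $n$ are orthogonal if superimposing them yields each ordered pair of symbols exactly once; an orthogonal mate of a Latin square is a Latin square orthogonal to it. Decomposition (from the cited structure theorem of Jungnickel et al. for non-full-3-rank STS, used here as the standing setup): if $S$ is an $STS(3^k)$ of $3$-rank at most $3^k-r$, then the point set $\mathcal{P}$ is partitioned into $M=3^{r-1}$ groups $G_x$ of size $T=3^{k-r+1}$, indexed by the points $x$ of the affine geometry $AG(r-1,3)$, and the block set splits as $\mathcal{B}=\bigcup_x \mathcal{B}_x\ \cup\ \bigcup_\ell \mathcal{B}_\ell$, where for each point $x$, $(G_x,\mathcal{B}_x)$ is an $STS(T)$, and for each line $\ell=\{x,y,z\}$ of $AG(r-1,3)$, $\mathcal{B}_\ell$ is a set of $T^2$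 blocks forming a transversal design $TD[3;T]$ on the three groups $G_x,G_y,G_z$. *)

theory Defs
  imports Main
begin

definition is_STS :: "'a set \<Rightarrow> 'a set set \<Rightarrow> bool" where
  "is_STS P Bs \<longleftrightarrow> finite P \<and> (\<forall>B\<in>Bs. B \<subseteq> P \<and> card B = 3) \<and>
     (\<forall>p\<in>P. \<forall>q\<in>P. p \<noteq> q \<longrightarrow> (\<exists>!B. B \<in> Bs \<and> p \<in> B \<and> q \<in> B))"

text \<open>Linear independence over F_3 of the rows (indexed by the blocks in A) of the
  block--point incidence matrix; F_3 is realised as the integers modulo 3.\<close>
definition f3_indep_rows :: "'a set \<Rightarrow> 'a set set \<Rightarrow> bool" where
  "f3_indep_rows P A \<longleftrightarrow>
     (\<forall>c :: 'a set \<Rightarrow> int.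
        (\<forall>p\<in>P. (\<Sum>B\<in>A. c B * (if p \<in> B then 1 else 0)) mod 3 = 0)
        \<longrightarrow> (\<forall>B\<in>A. c B mod 3 = 0))"

definition three_rank :: "'a set \<Rightarrow> 'a set set \<Rightarrow> nat" where
  "three_rank P Bs = Max {card A | A. A \<subseteq> Bs \<and> f3_indep_rows P A}"

definition parallel_class :: "'a set \<Rightarrow> 'a set set \<Rightarrow> 'a set set \<Rightarrow> bool" where
  "parallel_class P Bs \<pi> \<longleftrightarrow> \<pi> \<subseteq> Bs \<and> \<Union>\<pi> = P \<and>
     (\<forall>B\<in>\<pi>. \<forall>C\<in>\<pi>. B \<noteq> C \<longrightarrow> B \<inter> C = {})"

definition is_resolution :: "'a set \<Rightarrow> 'a set set \<Rightarrow> 'a set set set \<Rightarrow> bool" where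
  "is_resolution P Bs R \<longleftrightarrow> (\<forall>\<pi>\<in>R. parallel_class P Bs \<pi> \<and> \<pi> \<noteq> {}) \<and>
     \<Union>R = Bs \<and> (\<forall>\<pi>\<in>R. \<forall>\<sigma>\<in>R. \<pi> \<noteq> \<sigma> \<longrightarrow> \<pi> \<inter> \<sigma> = {})"

definition resolvable :: "'a set \<Rightarrow> 'a set set \<Rightarrow> bool" where
  "resolvable P Bs \<longleftrightarrow> (\<exists>R. is_resolution P Bs R)"

definition ag_points :: "nat \<Rightarrow> nat list set" where
  "ag_points n = {x. length x = n \<and> set x \<subseteq> {..<3}}"

definition ag_lines :: "nat \<Rightarrow> nat list set set" where
  "ag_lines n = {{map2 (\<lambda>ai di. (ai + t * di) mod 3) a d | t. t < 3} | a d.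
       a \<in> ag_points n \<and> d \<in> ag_points n \<and> d \<noteq> replicate n 0}"

definition is_TD :: "nat \<Rightarrow> 'a set \<Rightarrow> 'a set \<Rightarrow> 'a set \<Rightarrow> 'a set set \<Rightarrow> bool" where
  "is_TD T H1 H2 H3 Bs \<longleftrightarrow>
     finite H1 \<and> finite H2 \<and> finite H3 \<and>
     card H1 = T \<and> card H2 = T \<and> card H3 = T \<and>
     H1 \<inter> H2 = {} \<and> H1 \<inter> H3 = {} \<and> H2 \<inter> H3 = {} \<and>
     card Bs = T ^ 2 \<and>
     (\<forall>B\<in>Bs. \<exists>a\<in>H1. \<exists>b\<in>H2. \<exists>c\<in>H3. B = {a, b, c}) \<and>
     (\<forall>a\<in>H1. \<forall>b\<in>H2. \<exists>!B. B \<in> Bs \<and> a \<in> B \<and> b \<in> B) \<and>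
     (\<forall>a\<in>H1. \<forall>c\<in>H3. \<exists>!B. B \<in> Bs \<and> a \<in> B \<and> c \<in> B) \<and>
     (\<forall>b\<in>H2. \<forall>c\<in>H3. \<exists>!B. B \<in> Bs \<and> b \<in> B \<and> c \<in> B)"

text \<open>The Latin square of a TD: rows H1, columns H2, symbols H3.\<close>
definition TD_square :: "'a set \<Rightarrow> 'a set set \<Rightarrow> 'a \<Rightarrow> 'a \<Rightarrow> 'a" where
  "TD_square H3 Bs a b = (THE c. c \<in> H3 \<and> {a, b, c} \<in> Bs)"

definition latin_square :: "'r set \<Rightarrow> 'c set \<Rightarrow> 's set \<Rightarrow> ('r \<Rightarrow> 'c \<Rightarrow> 's) \<Rightarrow> bool" where
  "latin_square R C S L \<longleftrightarrow> finite R \<and> card R = card C \<and> card C = card S \<and>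
     (\<forall>a\<in>R. bij_betw (\<lambda>b. L a b) C S) \<and> (\<forall>b\<in>C. bij_betw (\<lambda>a. L a b) R S)"

definition orthogonal_squares ::
  "'r set \<Rightarrow> 'c set \<Rightarrow> ('r \<Rightarrow> 'c \<Rightarrow> 's) \<Rightarrow> ('r \<Rightarrow> 'c \<Rightarrow> 't) \<Rightarrow> bool" where
  "orthogonal_squares R C L1 L2 \<longleftrightarrow> inj_on (\<lambda>(a, b). (L1 a b, L2 a b)) (R \<times> C)"

text \<open>L (on R, C, S) has an orthogonal mate: a Latin square on the same rows and
  columns (symbols taken, w.l.o.g., from a set of the same size, here S itself)
  orthogonal to it.\<close>
definition has_orthogonal_mate :: "'r set \<Rightarrow> 'c set \<Rightarrow> 's set \<Rightarrow> ('r \<Rightarrow> 'c \<Rightarrow> 's) \<Rightarrow> bool" where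
  "has_orthogonal_mate R C S L \<longleftrightarrow>
     (\<exists>L'. latin_square R C S L' \<and> orthogonal_squares R C L L')"

definition STS_decomposition ::
  "'a set \<Rightarrow> 'a set set \<Rightarrow> nat \<Rightarrow> nat \<Rightarrow> (nat list \<Rightarrow> 'a set) \<Rightarrow>
   (nat list \<Rightarrow> 'a set set) \<Rightarrow> (nat list set \<Rightarrow> 'a set set) \<Rightarrow> bool" where
  "STS_decomposition P Bs r T G Bx Bl \<longleftrightarrow>
     (\<forall>x\<in>ag_points (r - 1). G x \<subseteq> P \<and> card (G x) = T) \<and>
     (\<forall>x\<in>ag_points (r - 1). \<forall>y\<in>ag_points (r - 1). x \<noteq> y \<longrightarrow> G x \<inter> G y = {}) \<and>
     (\<Union>x\<in>ag_points (r - 1). G x) = P \<and>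
     (\<forall>x\<in>ag_points (r - 1). is_STS (G x) (Bx x)) \<and>
     (\<forall>l\<in>ag_lines (r - 1). \<exists>x y z. l = {x, y, z} \<and> x \<noteq> y \<and> x \<noteq> z \<and> y \<noteq> z \<and>
         is_TD T (G x) (G y) (G z) (Bl l)) \<and>
     Bs = (\<Union>x\<in>ag_points (r - 1). Bx x) \<union> (\<Union>l\<in>ag_lines (r - 1). Bl l)"

end

theory Submission
  imports Defs
begin

text \<open>
  A resolution of S is assembled from resolutions of the pieces of the decomposition.
  For a direction of AG(r-1,3), the lines with that direction partition the points of
  AG(r-1,3); choosing one symbol s of the orthogonal mate of each such line's Latin
  square, the blocks in the cells of symbol s form a parallel class of that line's
  transversal design, and together these form a parallel class of S. This gives T
  parallel classes per direction. The blocks inside the groups are covered by taking the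
  j-th parallel class of a resolution of every subsystem (G_x, B_x) simultaneously.
  The number of classes needs no bookkeeping: in any resolution of an STS(v) each class
  contains exactly one of the (v-1)/2 blocks through a fixed point.
\<close>

section \<open>Parallel classes and their colourings\<close>

lemma parallel_class_mono:
  "parallel_class P Bs \<pi> \<Longrightarrow> Bs \<subseteq> Bs' \<Longrightarrow> parallel_class P Bs' \<pi>"
  unfolding parallel_class_def by blast

lemma parallel_class_block_unique:
  "parallel_class P Bs \<pi> \<Longrightarrow> B \<in> \<pi> \<Longrightarrow> C \<in> \<pi> \<Longrightarrow> p \<in> B \<Longrightarrow> p \<in> C \<Longrightarrow> B = C"
  unfolding parallel_class_def by (metis disjoint_iff)

lemma parallel_class_block_exists:
  "parallel_class P Bs \<pi> \<Longrightarrow> p \<in> P \<Longrightarrow> \<exists>B\<in>\<pi>. p \<in> B"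
  unfolding parallel_class_def by blast

lemma parallel_class_UN:
  assumes "\<And>i. i \<in> I \<Longrightarrow> parallel_class (Q i) Bs (\<pi> i)"
    and "\<And>i j. i \<in> I \<Longrightarrow> j \<in> I \<Longrightarrow> i \<noteq> j \<Longrightarrow> Q i \<inter> Q j = {}"
  shows "parallel_class (\<Union>i\<in>I. Q i) Bs (\<Union>i\<in>I. \<pi> i)"
  unfolding parallel_class_def
proof (intro conjI ballI impI)
  show "(\<Union>i\<in>I. \<pi> i) \<subseteq> Bs"
    using assms(1) unfolding parallel_class_def by blast
  show "\<Union>(\<Union>i\<in>I. \<pi> i) = (\<Union>i\<in>I. Q i)"
  proof -
    have "\<Union>(\<pi> i) = Q i" if "i \<in> I" for i
      using assms(1)[OF that] unfolding parallel_class_def by blast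
    then show ?thesis by blast
  qed
next
  fix B C assume "B \<in> (\<Union>i\<in>I. \<pi> i)" "C \<in> (\<Union>i\<in>I. \<pi> i)" "B \<noteq> C"
  then obtain i j where ij: "i \<in> I" "j \<in> I" "B \<in> \<pi> i" "C \<in> \<pi> j" by blast
  show "B \<inter> C = {}"
  proof (cases "i = j")
    case True
    then show ?thesis
      using assms(1)[OF ij(1)] ij \<open>B \<noteq> C\<close> unfolding parallel_class_def by blast
  next
    case False
    have "B \<subseteq> Q i" "C \<subseteq> Q j"
      using assms(1) ij unfolding parallel_class_def by blast+
    then show ?thesis using assms(2)[OF ij(1,2) False] by blast
  qed
qed

text \<open>A resolution seen as a labelling of the blocks by the parallel class containing
  them; in this form distinct classes are disjoint for free, and resolutions of pieces
  glue together by just gluing the labellings.\<close>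
definition parallel_colouring ::
  "'a set \<Rightarrow> 'a set set \<Rightarrow> 'k set \<Rightarrow> ('a set \<Rightarrow> 'k) \<Rightarrow> bool" where
  "parallel_colouring P Bs K c \<longleftrightarrow>
     (\<forall>B\<in>Bs. c B \<in> K) \<and> (\<forall>k\<in>K. parallel_class P Bs {B \<in> Bs. c B = k})"

lemma parallel_colouring_block_subset:
  "parallel_colouring P Bs K c \<Longrightarrow> B \<in> Bs \<Longrightarrow> B \<subseteq> P"
  unfolding parallel_colouring_def parallel_class_def by blast

lemma resolution_of_parallel_colouring:
  assumes col: "parallel_colouring P Bs K c" and "P \<noteq> {}"
  shows "is_resolution P Bs ((\<lambda>k. {B \<in> Bs. c B = k}) ` K)"
  unfolding is_resolution_def
proof (intro conjI ballI impI)
  fix \<pi> assume "\<pi> \<in> (\<lambda>k. {B \<in> Bs. c B = k}) ` K"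
  then obtain k where "k \<in> K" "\<pi> = {B \<in> Bs. c B = k}" by blast
  then have pc: "parallel_class P Bs \<pi>" using col unfolding parallel_colouring_def by blast
  then show "parallel_class P Bs \<pi>" .
  show "\<pi> \<noteq> {}"
    using pc \<open>P \<noteq> {}\<close> unfolding parallel_class_def by auto
next
  show "\<Union>((\<lambda>k. {B \<in> Bs. c B = k}) ` K) = Bs"
    using col unfolding parallel_colouring_def by auto
next
  fix \<pi> \<sigma>
  assume "\<pi> \<in> (\<lambda>k. {B \<in> Bs. c B = k}) ` K" "\<sigma> \<in> (\<lambda>k. {B \<in> Bs. c B = k}) ` K" "\<pi> \<noteq> \<sigma>"
  then show "\<pi> \<inter> \<sigma> = {}" by auto
qed

lemma parallel_colouring_of_resolution:
  assumes res: "is_resolution P Bs R" and e: "bij_betw e K R"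
  shows "parallel_colouring P Bs K (\<lambda>B. THE k. k \<in> K \<and> B \<in> e k)"
    (is "parallel_colouring P Bs K ?label")
proof -
  have pc: "parallel_class P Bs (e k)" if "k \<in> K" for k
    using res bij_betwE[OF e] that unfolding is_resolution_def by blast
  have disj: "e k \<inter> e k' = {}" if "k \<in> K" "k' \<in> K" "k \<noteq> k'" for k k'
    using res bij_betwE[OF e] that inj_onD[OF bij_betw_imp_inj_on[OF e]]
    unfolding is_resolution_def by metis
  have label: "?label B = k" if "k \<in> K" "B \<in> e k" for B k
    using disj that by (intro the_equality) blast+
  have "\<Union>(e ` K) = Bs"
    using res bij_betw_imp_surj_on[OF e] unfolding is_resolution_def by blast
  then have label_in: "?label B \<in> K \<and> B \<in> e (?label B)" if "B \<in> Bs" for B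
    using that label by fastforce
  have "{B \<in> Bs. ?label B = k} = e k" if "k \<in> K" for k
  proof -
    have "e k \<subseteq> Bs" using pc[OF that] unfolding parallel_class_def by blast
    then show ?thesis using label label_in that by blast
  qed
  then show ?thesis
    unfolding parallel_colouring_def using pc label_in by simp
qed

lemma parallel_colouring_reindex:
  assumes col: "parallel_colouring P Bs K c" and f: "bij_betw f K' K"
  shows "parallel_colouring P Bs K' (inv_into K' f \<circ> c)"
proof -
  have c: "c B \<in> K" if "B \<in> Bs" for B
    using col that unfolding parallel_colouring_def by blast
  have "(inv_into K' f \<circ> c) B = k' \<longleftrightarrow> c B = f k'" if "B \<in> Bs" "k' \<in> K'" for B k'
    using c[OF that(1)] that(2) f
    by (metis bij_betw_inv_into_right comp_apply bij_betw_imp_inj_on inv_into_f_f)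
  then have "{B \<in> Bs. (inv_into K' f \<circ> c) B = k'} = {B \<in> Bs. c B = f k'}" if "k' \<in> K'" for k'
    using that by blast
  moreover have "(inv_into K' f \<circ> c) B \<in> K'" if "B \<in> Bs" for B
    using c[OF that] f by (simp add: bij_betw_def inv_into_into)
  ultimately show ?thesis
    using col bij_betwE[OF f] unfolding parallel_colouring_def by simp
qed

lemma parallel_colouring_UN_disjoint_parts:
  assumes col: "\<And>i. i \<in> I \<Longrightarrow> parallel_colouring (Q i) (Bs i) K (c i)"
    and disj: "\<And>i j. i \<in> I \<Longrightarrow> j \<in> I \<Longrightarrow> i \<noteq> j \<Longrightarrow> Q i \<inter> Q j = {}"
    and nonempty: "\<And>i. i \<in> I \<Longrightarrow> {} \<notin> Bs i"
  shows "\<exists>c'. parallel_colouring (\<Union>i\<in>I. Q i) (\<Union>i\<in>I. Bs i) K c'"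
proof -
  define part where "part B = (SOME i. i \<in> I \<and> B \<in> Bs i)" for B
  have part: "part B = i" if "i \<in> I" "B \<in> Bs i" for i B
    unfolding part_def
  proof (rule some_equality)
    fix j assume j: "j \<in> I \<and> B \<in> Bs j"
    have "B \<subseteq> Q i" "B \<subseteq> Q j" "B \<noteq> {}"
      using that j nonempty parallel_colouring_block_subset[OF col] by blast+
    then show "j = i" using disj that j by blast
  qed (use that in blast)
  define c' where "c' B = c (part B) B" for B
  have "{B \<in> (\<Union>i\<in>I. Bs i). c' B = k} = (\<Union>i\<in>I. {B \<in> Bs i. c i B = k})" for k
    using part unfolding c'_def by auto
  moreover have "parallel_class (Q i) (\<Union>i\<in>I. Bs i) {B \<in> Bs i. c i B = k}"
    if "i \<in> I" "k \<in> K" for i k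
    using col[OF that(1)] that parallel_class_mono unfolding parallel_colouring_def by blast
  ultimately have "parallel_class (\<Union>i\<in>I. Q i) (\<Union>i\<in>I. Bs i) {B \<in> (\<Union>i\<in>I. Bs i). c' B = k}"
    if "k \<in> K" for k
    using that disj by (simp add: parallel_class_UN)
  moreover have "c' B \<in> K" if "B \<in> (\<Union>i\<in>I. Bs i)" for B
    using that col part unfolding c'_def parallel_colouring_def by auto
  ultimately show ?thesis unfolding parallel_colouring_def by blast
qed

lemma parallel_colouring_UN_disjoint_blocks:
  assumes col: "\<And>a. a \<in> A \<Longrightarrow> parallel_colouring P (Bs a) (K a) (c a)"
    and disj: "\<And>a b. a \<in> A \<Longrightarrow> b \<in> A \<Longrightarrow> a \<noteq> b \<Longrightarrow> Bs a \<inter> Bs b = {}"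
  shows "\<exists>c'. parallel_colouring P (\<Union>a\<in>A. Bs a) (SIGMA a:A. K a) c'"
proof -
  define family where "family B = (SOME a. a \<in> A \<and> B \<in> Bs a)" for B
  have family: "family B = a" if "a \<in> A" "B \<in> Bs a" for a B
    unfolding family_def
    by (rule some_equality) (use that disj in blast)+
  define c' where "c' B = (family B, c (family B) B)" for B
  have "{B \<in> (\<Union>a\<in>A. Bs a). c' B = (a, k)} = {B \<in> Bs a. c a B = k}" if "a \<in> A" for a k
    using family that unfolding c'_def by auto
  moreover have "parallel_class P (\<Union>a\<in>A. Bs a) {B \<in> Bs a. c a B = k}"
    if "a \<in> A" "k \<in> K a" for a k
    using col[OF that(1)] that parallel_class_mono unfolding parallel_colouring_def by blast
  ultimately have "parallel_class P (\<Union>a\<in>A. Bs a) {B \<in> (\<Union>a\<in>A. Bs a). c' B = ak}"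
    if "ak \<in> (SIGMA a:A. K a)" for ak
    using that by auto
  moreover have "c' B \<in> (SIGMA a:A. K a)" if "B \<in> (\<Union>a\<in>A. Bs a)" for B
    using that col family unfolding c'_def parallel_colouring_def by auto
  ultimately show ?thesis unfolding parallel_colouring_def by blast
qed

section \<open>Resolutions of Steiner triple systems\<close>

lemma STS_replication_number:
  assumes sts: "is_STS P Bs" and p: "p \<in> P"
  shows "card P - 1 = 2 * card {B \<in> Bs. p \<in> B}"
proof -
  define D where "D = {B \<in> Bs. p \<in> B}"
  have fin: "finite P" and blocks: "\<And>B. B \<in> Bs \<Longrightarrow> B \<subseteq> P \<and> card B = 3"
    using sts by (simp_all add: is_STS_def)
  have unique: "\<And>q. q \<in> P \<Longrightarrow> q \<noteq> p \<Longrightarrow> \<exists>!B. B \<in> Bs \<and> p \<in> B \<and> q \<in> B"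
    using sts p by (simp add: is_STS_def)
  have "D \<subseteq> Pow P" using blocks by (auto simp: D_def)
  then have "finite D" using fin by (simp add: finite_subset)
  have D: "B \<in> Bs" "p \<in> B" "finite B" "card B = 3" if "B \<in> D" for B
    using that blocks fin finite_subset unfolding D_def by blast+
  have "P - {p} = (\<Union>B\<in>D. B - {p})"
  proof
    show "P - {p} \<subseteq> (\<Union>B\<in>D. B - {p})"
      using unique unfolding D_def by blast
    show "(\<Union>B\<in>D. B - {p}) \<subseteq> P - {p}"
      using blocks D by blast
  qed
  also have "card \<dots> = (\<Sum>B\<in>D. card (B - {p}))"
  proof (intro card_UN_disjoint ballI impI)
    fix B C assume "B \<in> D" "C \<in> D" "B \<noteq> C"
    then show "(B - {p}) \<inter> (C - {p}) = {}"
      using unique blocks D by blast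
  qed (use \<open>finite D\<close> D in simp_all)
  also have "\<dots> = (\<Sum>B\<in>D. 2)"
    using D by (intro sum.cong) simp_all
  finally show ?thesis using p fin by (simp add: D_def)
qed

lemma resolution_card_eq_replication_number:
  assumes res: "is_resolution P Bs R" and p: "p \<in> P"
  shows "card R = card {B \<in> Bs. p \<in> B}"
proof -
  have pc: "\<And>\<pi>. \<pi> \<in> R \<Longrightarrow> parallel_class P Bs \<pi>"
    using res by (simp add: is_resolution_def)
  define block_at_p where "block_at_p \<pi> = (THE B. B \<in> \<pi> \<and> p \<in> B)" for \<pi>
  have block_at_p: "block_at_p \<pi> = B" if "\<pi> \<in> R" "B \<in> \<pi>" "p \<in> B" for \<pi> B
    unfolding block_at_p_def
    using parallel_class_block_unique[OF pc[OF that(1)]] that by (intro the_equality) auto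
  have block_at_p_in: "block_at_p \<pi> \<in> \<pi> \<and> p \<in> block_at_p \<pi>" if "\<pi> \<in> R" for \<pi>
    using parallel_class_block_exists[OF pc[OF that] p] block_at_p that by metis
  have "bij_betw block_at_p R {B \<in> Bs. p \<in> B}"
  proof (rule bij_betw_imageI)
    show "inj_on block_at_p R"
    proof (rule inj_onI)
      fix \<pi> \<sigma> assume "\<pi> \<in> R" "\<sigma> \<in> R" "block_at_p \<pi> = block_at_p \<sigma>"
      then have "\<pi> \<inter> \<sigma> \<noteq> {}" using block_at_p_in by (metis disjoint_iff)
      then show "\<pi> = \<sigma>" using res \<open>\<pi> \<in> R\<close> \<open>\<sigma> \<in> R\<close> unfolding is_resolution_def by blast
    qed
    have "\<pi> \<subseteq> Bs" if "\<pi> \<in> R" for \<pi>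
      using pc[OF that] unfolding parallel_class_def by blast
    moreover have "\<Union>R = Bs" using res unfolding is_resolution_def by blast
    ultimately show "block_at_p ` R = {B \<in> Bs. p \<in> B}"
      using block_at_p block_at_p_in by blast
  qed
  then show ?thesis by (rule bij_betw_same_card)
qed

lemma STS_resolution_card:
  assumes "is_STS P Bs" "is_resolution P Bs R" "P \<noteq> {}"
  shows "2 * card R = card P - 1"
proof -
  obtain p where "p \<in> P" using \<open>P \<noteq> {}\<close> by blast
  then show ?thesis
    using STS_replication_number[OF assms(1)] resolution_card_eq_replication_number[OF assms(2)]
    by simp
qed

lemma resolvable_STS_parallel_colouring:
  assumes sts: "is_STS P Bs" and "resolvable P Bs" and "P \<noteq> {}"
  shows "\<exists>c. parallel_colouring P Bs {..<(card P - 1) div 2} c"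
proof -
  obtain R where res: "is_resolution P Bs R"
    using \<open>resolvable P Bs\<close> unfolding resolvable_def by blast
  have "\<pi> \<subseteq> Bs" if "\<pi> \<in> R" for \<pi>
    using res that unfolding is_resolution_def parallel_class_def by simp
  moreover have "Bs \<subseteq> Pow P" "finite P"
    using sts unfolding is_STS_def by auto
  ultimately have "finite R"
    by (meson PowI finite_Pow_iff finite_subset subsetI)
  then obtain e where e: "bij_betw e {..<card R} R"
    using ex_bij_betw_nat_finite lessThan_atLeast0 by metis
  have "card R = (card P - 1) div 2"
    using STS_resolution_card[OF sts res \<open>P \<noteq> {}\<close>] by simp
  then show ?thesis
    using parallel_colouring_of_resolution[OF res e] by auto
qed

section \<open>Parallel classes of lines in AG(n,3)\<close>

definition ag_along :: "nat list \<Rightarrow> nat list \<Rightarrow> nat \<Rightarrow> nat list" where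
  "ag_along a d t = map2 (\<lambda>ai di. (ai + t * di) mod 3) a d"

definition ag_line :: "nat list \<Rightarrow> nat list \<Rightarrow> nat list set" where
  "ag_line a d = {ag_along a d t | t. t < 3}"

definition ag_add :: "nat list \<Rightarrow> nat list \<Rightarrow> nat list" where
  "ag_add v p = map2 (\<lambda>a b. (a + b) mod 3) v p"

definition ag_diff :: "nat list \<Rightarrow> nat list \<Rightarrow> nat list" where
  "ag_diff b a = map2 (\<lambda>x y. (x + 3 - y) mod 3) b a"

definition ag_parallels :: "nat \<Rightarrow> nat list set \<Rightarrow> nat list set set" where
  "ag_parallels n l = {l' \<in> ag_lines n. \<exists>v\<in>ag_points n. l' = ag_add v ` l}"

lemma ag_points_length: "x \<in> ag_points n \<Longrightarrow> length x = n"
  unfolding ag_points_def by auto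

lemma ag_points_nth: "x \<in> ag_points n \<Longrightarrow> i < n \<Longrightarrow> x ! i < 3"
  unfolding ag_points_def by (auto simp: subset_iff)

lemma ag_pointsI: "length x = n \<Longrightarrow> (\<And>i. i < n \<Longrightarrow> x ! i < 3) \<Longrightarrow> x \<in> ag_points n"
  unfolding ag_points_def by (auto simp: in_set_conv_nth)

lemma ag_lines_eq:
  "ag_lines n = {ag_line a d | a d. a \<in> ag_points n \<and> d \<in> ag_points n \<and> d \<noteq> replicate n 0}"
  unfolding ag_lines_def ag_line_def ag_along_def by simp

lemma ag_along_in_points:
  "a \<in> ag_points n \<Longrightarrow> d \<in> ag_points n \<Longrightarrow> ag_along a d t \<in> ag_points n"
  by (rule ag_pointsI) (auto simp: ag_along_def ag_points_length)

lemma ag_add_in_points: "a \<in> ag_points n \<Longrightarrow> v \<in> ag_points n \<Longrightarrow> ag_add v a \<in> ag_points n"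
  by (rule ag_pointsI) (auto simp: ag_add_def ag_points_length)

lemma ag_diff_in_points: "a \<in> ag_points n \<Longrightarrow> b \<in> ag_points n \<Longrightarrow> ag_diff b a \<in> ag_points n"
  by (rule ag_pointsI) (auto simp: ag_diff_def ag_points_length)

lemma ag_line_subset_points:
  "a \<in> ag_points n \<Longrightarrow> d \<in> ag_points n \<Longrightarrow> ag_line a d \<subseteq> ag_points n"
  unfolding ag_line_def using ag_along_in_points by blast

lemma ag_lines_subset_points: "l \<in> ag_lines n \<Longrightarrow> l \<subseteq> ag_points n"
  by (auto simp: ag_lines_eq dest: ag_line_subset_points)

lemma ag_along_along:
  assumes "a \<in> ag_points n" "d \<in> ag_points n"
  shows "ag_along (ag_along a d t) d s = ag_along a d ((t + s) mod 3)"
proof (rule nth_equalityI)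
  fix i assume "i < length (ag_along (ag_along a d t) d s)"
  have "((x + t * y) mod 3 + s * y) mod 3 = (x + ((t + s) mod 3) * y) mod 3" for x y :: nat
    by (metis add.assoc distrib_right mod_add_left_eq mod_add_right_eq mod_mult_left_eq)
  with \<open>i < _\<close> show "ag_along (ag_along a d t) d s ! i = ag_along a d ((t + s) mod 3) ! i"
    using assms by (simp add: ag_along_def ag_points_length)
qed (use assms in \<open>simp add: ag_along_def ag_points_length\<close>)

lemma ag_along_0: "a \<in> ag_points n \<Longrightarrow> d \<in> ag_points n \<Longrightarrow> ag_along a d 0 = a"
  by (rule nth_equalityI) (auto simp: ag_along_def ag_points_length ag_points_nth)

lemma ag_line_self: "a \<in> ag_points n \<Longrightarrow> d \<in> ag_points n \<Longrightarrow> a \<in> ag_line a d"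
  unfolding ag_line_def using ag_along_0[symmetric] by fastforce

lemma ag_line_eq_if_mem:
  assumes a: "a \<in> ag_points n" and d: "d \<in> ag_points n" and p: "p \<in> ag_line a d"
  shows "ag_line p d = ag_line a d"
proof -
  obtain t where t: "t < 3" "p = ag_along a d t" using p unfolding ag_line_def by auto
  have "ag_along p d s \<in> ag_line a d" for s
    using a d t by (auto simp: ag_line_def ag_along_along)
  moreover have "ag_along a d s \<in> ag_line p d" if "s < 3" for s
  proof -
    \<comment> \<open>a + s d = p + (s + 2 t) d, since p = a + t d and 3 t d = 0\<close>
    have "ag_along p d ((s + 2 * t) mod 3) = ag_along a d ((t + (s + 2 * t) mod 3) mod 3)"
      using t a d by (simp add: ag_along_along)
    also have "(t + (s + 2 * t) mod 3) mod 3 = s"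
      using that t(1) by (simp add: mod_add_right_eq)
    finally have "ag_along a d s = ag_along p d ((s + 2 * t) mod 3)" by simp
    then show ?thesis unfolding ag_line_def by (intro CollectI exI[of _ "(s + 2 * t) mod 3"]) simp
  qed
  ultimately show ?thesis unfolding ag_line_def by blast
qed

lemma ag_add_along:
  assumes "a \<in> ag_points n" "d \<in> ag_points n" "v \<in> ag_points n"
  shows "ag_add v (ag_along a d t) = ag_along (ag_add v a) d t"
proof (rule nth_equalityI)
  fix i assume "i < length (ag_add v (ag_along a d t))"
  have "(w + (x + t * y) mod 3) mod 3 = ((w + x) mod 3 + t * y) mod 3" for w x y :: nat
    by (simp add: mod_add_left_eq mod_add_right_eq add.assoc)
  with \<open>i < _\<close> show "ag_add v (ag_along a d t) ! i = ag_along (ag_add v a) d t ! i"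
    using assms by (simp add: ag_along_def ag_add_def ag_points_length)
qed (use assms in \<open>simp add: ag_along_def ag_add_def ag_points_length\<close>)

lemma ag_add_diff:
  assumes "a \<in> ag_points n" "b \<in> ag_points n"
  shows "ag_add (ag_diff b a) a = b"
proof (rule nth_equalityI)
  fix i assume "i < length (ag_add (ag_diff b a) a)"
  then have "i < n" using assms by (simp add: ag_add_def ag_diff_def ag_points_length)
  have "((y + 3 - x) mod 3 + x) mod 3 = y" if "x < 3" "y < 3" for x y :: nat
    using that by (simp add: mod_add_left_eq)
  then show "ag_add (ag_diff b a) a ! i = b ! i"
    using assms \<open>i < n\<close> ag_points_nth by (simp add: ag_add_def ag_diff_def ag_points_length)
qed (use assms in \<open>simp add: ag_add_def ag_diff_def ag_points_length\<close>)

lemma ag_add_image_line: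
  assumes "a \<in> ag_points n" "d \<in> ag_points n" "v \<in> ag_points n"
  shows "ag_add v ` ag_line a d = ag_line (ag_add v a) d"
proof -
  have "ag_add v ` ag_line a d = {ag_add v (ag_along a d t) | t. t < 3}"
    unfolding ag_line_def by blast
  then show ?thesis using ag_add_along[OF assms] by (simp add: ag_line_def)
qed

lemma ag_parallels_line:
  assumes a: "a \<in> ag_points n" and d: "d \<in> ag_points n" "d \<noteq> replicate n 0"
  shows "ag_parallels n (ag_line a d) = {ag_line b d | b. b \<in> ag_points n}"
proof
  show "ag_parallels n (ag_line a d) \<subseteq> {ag_line b d | b. b \<in> ag_points n}"
    using a d by (auto simp: ag_parallels_def ag_add_image_line ag_add_in_points)
next
  show "{ag_line b d | b. b \<in> ag_points n} \<subseteq> ag_parallels n (ag_line a d)"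
  proof clarify
    fix b assume b: "b \<in> ag_points n"
    have "ag_line b d = ag_add (ag_diff b a) ` ag_line a d"
      using a d b by (simp add: ag_add_image_line ag_diff_in_points ag_add_diff)
    moreover have "ag_line b d \<in> ag_lines n" using d b by (auto simp: ag_lines_eq)
    ultimately show "ag_line b d \<in> ag_parallels n (ag_line a d)"
      using a b ag_diff_in_points unfolding ag_parallels_def by blast
  qed
qed

lemma ag_parallels_subset_lines: "ag_parallels n l \<subseteq> ag_lines n"
  by (auto simp: ag_parallels_def)

lemma ag_parallels_self: "l \<in> ag_lines n \<Longrightarrow> l \<in> ag_parallels n l"
  by (auto simp: ag_lines_eq ag_parallels_line)

lemma ag_parallels_eq:
  assumes "l \<in> ag_lines n" "l' \<in> ag_parallels n l"
  shows "ag_parallels n l' = ag_parallels n l"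
proof -
  obtain a d where ad: "l = ag_line a d" "a \<in> ag_points n" "d \<in> ag_points n" "d \<noteq> replicate n 0"
    using assms(1) by (auto simp: ag_lines_eq)
  then obtain b where "l' = ag_line b d" "b \<in> ag_points n"
    using assms(2) ag_parallels_line by blast
  then show ?thesis using ad ag_parallels_line by simp
qed

lemma ag_parallels_cover:
  assumes "l \<in> ag_lines n"
  shows "\<Union>(ag_parallels n l) = ag_points n"
proof -
  obtain a d where ad: "l = ag_line a d" "a \<in> ag_points n" "d \<in> ag_points n" "d \<noteq> replicate n 0"
    using assms by (auto simp: ag_lines_eq)
  have "\<Union>{ag_line b d | b. b \<in> ag_points n} = ag_points n"
  proof
    show "\<Union>{ag_line b d | b. b \<in> ag_points n} \<subseteq> ag_points n"
      using ag_line_subset_points ad(3) by blast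
    show "ag_points n \<subseteq> \<Union>{ag_line b d | b. b \<in> ag_points n}"
      using ag_line_self ad(3) by blast
  qed
  then show ?thesis using ad by (simp add: ag_parallels_line)
qed

lemma ag_parallels_disjoint:
  assumes "l \<in> ag_lines n" "l1 \<in> ag_parallels n l" "l2 \<in> ag_parallels n l" "l1 \<noteq> l2"
  shows "l1 \<inter> l2 = {}"
proof -
  obtain a d where ad: "l = ag_line a d" "a \<in> ag_points n" "d \<in> ag_points n" "d \<noteq> replicate n 0"
    using assms(1) by (auto simp: ag_lines_eq)
  have "l1 \<in> {ag_line b d | b. b \<in> ag_points n}" "l2 \<in> {ag_line b d | b. b \<in> ag_points n}"
    using assms(2,3) ad by (simp_all add: ag_parallels_line)
  then obtain b1 b2 where b: "l1 = ag_line b1 d" "b1 \<in> ag_points n" "l2 = ag_line b2 d" "b2 \<in> ag_points n"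
    by blast
  show ?thesis
  proof (rule ccontr)
    assume "l1 \<inter> l2 \<noteq> {}"
    then obtain p where p: "p \<in> ag_line b1 d" "p \<in> ag_line b2 d" using b by blast
    have "ag_line p d = l1" "ag_line p d = l2"
      using ag_line_eq_if_mem[OF b(2) ad(3) p(1)] ag_line_eq_if_mem[OF b(4) ad(3) p(2)] b
      by simp_all
    with assms(4) show False by simp
  qed
qed

section \<open>Transversal designs with an orthogonal mate\<close>

lemma latin_square_row: "latin_square R C S L \<Longrightarrow> a \<in> R \<Longrightarrow> bij_betw (L a) C S"
  unfolding latin_square_def by blast

lemma latin_square_column: "latin_square R C S L \<Longrightarrow> b \<in> C \<Longrightarrow> bij_betw (\<lambda>a. L a b) R S"
  unfolding latin_square_def by blast

text \<open>Each colour class is a parallel class: its cells meet every row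
  and every column once, as the mate is Latin, and carry distinct symbols of the square
  itself, by orthogonality.\<close>
definition mate_colour :: "'a set \<Rightarrow> 'a set \<Rightarrow> ('a \<Rightarrow> 'a \<Rightarrow> 'b) \<Rightarrow> 'a set \<Rightarrow> 'b" where
  "mate_colour H1 H2 L' B = L' (the_elem (B \<inter> H1)) (the_elem (B \<inter> H2))"

context
  fixes T :: nat and H1 H2 H3 :: "'a set" and Bs :: "'a set set"
  assumes TD: "is_TD T H1 H2 H3 Bs"
begin

lemma TD_groups_disjoint: "H1 \<inter> H2 = {}" "H1 \<inter> H3 = {}" "H2 \<inter> H3 = {}"
  using TD unfolding is_TD_def by simp_all

lemma TD_block_form: "B \<in> Bs \<Longrightarrow> \<exists>a\<in>H1. \<exists>b\<in>H2. \<exists>c\<in>H3. B = {a, b, c}"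
  using TD unfolding is_TD_def by (elim conjE) (rule bspec)

lemma TD_block_unique: "a \<in> H1 \<Longrightarrow> b \<in> H2 \<Longrightarrow> \<exists>!B. B \<in> Bs \<and> a \<in> B \<and> b \<in> B"
  using TD unfolding is_TD_def by simp

lemma TD_square_block:
  assumes a: "a \<in> H1" and b: "b \<in> H2"
  shows "TD_square H3 Bs a b \<in> H3" "{a, b, TD_square H3 Bs a b} \<in> Bs"
proof -
  note unique = TD_block_unique[OF a b]
  then obtain B where B: "B \<in> Bs" "a \<in> B" "b \<in> B" by blast
  then obtain a' b' c where abc: "a' \<in> H1" "b' \<in> H2" "c \<in> H3" "B = {a', b', c}"
    using TD_block_form by blast
  then have "a' = a" "b' = b"
    using B a b TD_groups_disjoint by blast+
  with abc B have c: "c \<in> H3 \<and> {a, b, c} \<in> Bs" by simp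
  have "c' = c" if "c' \<in> H3 \<and> {a, b, c'} \<in> Bs" for c'
  proof -
    have "{a, b, c'} = {a, b, c}" using unique that c by blast
    then have "c' \<in> {a, b, c}" by blast
    moreover have "c' \<noteq> a" "c' \<noteq> b" using that a b TD_groups_disjoint by blast+
    ultimately show ?thesis by simp
  qed
  with c have "TD_square H3 Bs a b = c"
    unfolding TD_square_def by (intro the_equality) blast+
  with c show "TD_square H3 Bs a b \<in> H3" "{a, b, TD_square H3 Bs a b} \<in> Bs" by simp_all
qed

lemma TD_block_eq_square:
  assumes "B \<in> Bs"
  shows "\<exists>a\<in>H1. \<exists>b\<in>H2. B = {a, b, TD_square H3 Bs a b}"
proof -
  obtain a b c where abc: "a \<in> H1" "b \<in> H2" "c \<in> H3" "B = {a, b, c}"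
    using TD_block_form[OF assms] by blast
  have "{a, b, TD_square H3 Bs a b} = B"
    using TD_block_unique[OF abc(1,2)] abc assms TD_square_block[OF abc(1,2)] by blast
  then show ?thesis using abc by blast
qed

context
  fixes L' :: "'a \<Rightarrow> 'a \<Rightarrow> 'a"
  assumes latin: "latin_square H1 H2 H3 L'"
    and orth: "orthogonal_squares H1 H2 (TD_square H3 Bs) L'"
begin

lemma mate_colour_square_block:
  assumes "a \<in> H1" "b \<in> H2"
  shows "mate_colour H1 H2 L' {a, b, TD_square H3 Bs a b} = L' a b"
proof -
  have "TD_square H3 Bs a b \<in> H3" using TD_square_block assms by blast
  then have "{a, b, TD_square H3 Bs a b} \<inter> H1 = {a}" "{a, b, TD_square H3 Bs a b} \<inter> H2 = {b}"
    using assms TD_groups_disjoint by blast+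
  then show ?thesis unfolding mate_colour_def by simp
qed

lemma mate_colour_class:
  "{B \<in> Bs. mate_colour H1 H2 L' B = s} =
     {{a, b, TD_square H3 Bs a b} | a b. a \<in> H1 \<and> b \<in> H2 \<and> L' a b = s}"
  using TD_block_eq_square TD_square_block(2) mate_colour_square_block by fastforce

lemma mate_symbol_in_symbols: "a \<in> H1 \<Longrightarrow> b \<in> H2 \<Longrightarrow> L' a b \<in> H3"
  using latin_square_row[OF latin] bij_betwE by blast

lemma mate_pairs_surj:
  "(\<lambda>(a, b). (TD_square H3 Bs a b, L' a b)) ` (H1 \<times> H2) = H3 \<times> H3"
proof (rule card_subset_eq)
  have fin: "finite H1" "finite H2" "finite H3" "card H1 = T" "card H2 = T" "card H3 = T"
    using TD unfolding is_TD_def by simp_all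
  then show "finite (H3 \<times> H3)" by simp
  show "(\<lambda>(a, b). (TD_square H3 Bs a b, L' a b)) ` (H1 \<times> H2) \<subseteq> H3 \<times> H3"
    using TD_square_block(1) mate_symbol_in_symbols by auto
  have "inj_on (\<lambda>(a, b). (TD_square H3 Bs a b, L' a b)) (H1 \<times> H2)"
    using orth unfolding orthogonal_squares_def .
  then show "card ((\<lambda>(a, b). (TD_square H3 Bs a b, L' a b)) ` (H1 \<times> H2)) = card (H3 \<times> H3)"
    using fin by (simp add: card_image card_cartesian_product)
qed

lemma mate_colour_class_covers:
  assumes s: "s \<in> H3"
  shows "\<Union>{B \<in> Bs. mate_colour H1 H2 L' B = s} = H1 \<union> H2 \<union> H3"
proof
  show "\<Union>{B \<in> Bs. mate_colour H1 H2 L' B = s} \<subseteq> H1 \<union> H2 \<union> H3"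
    unfolding mate_colour_class using TD_square_block(1) by blast
next
  note row = latin_square_row[OF latin] and col = latin_square_column[OF latin]
  have cover: "\<exists>a b. a \<in> H1 \<and> b \<in> H2 \<and> L' a b = s \<and> x \<in> {a, b, TD_square H3 Bs a b}"
    if x: "x \<in> H1 \<union> H2 \<union> H3" for x
  proof -
    consider "x \<in> H1" | "x \<in> H2" | "x \<in> H3" using x by blast
    then show ?thesis
    proof cases
      case 1
      then obtain b where "b \<in> H2" "L' x b = s"
        using row[OF 1] s by (metis bij_betw_iff_bijections)
      then show ?thesis using 1 by blast
    next
      case 2
      then obtain a where "a \<in> H1" "L' a x = s"
        using col[OF 2] s by (metis bij_betw_iff_bijections)
      then show ?thesis using 2 by blast
    next
      case 3
      then have "(x, s) \<in> (\<lambda>(a, b). (TD_square H3 Bs a b, L' a b)) ` (H1 \<times> H2)"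
        using mate_pairs_surj s by blast
      then show ?thesis by force
    qed
  qed
  show "H1 \<union> H2 \<union> H3 \<subseteq> \<Union>{B \<in> Bs. mate_colour H1 H2 L' B = s}"
  proof
    fix x assume "x \<in> H1 \<union> H2 \<union> H3"
    then obtain a b where "a \<in> H1" "b \<in> H2" "L' a b = s" "x \<in> {a, b, TD_square H3 Bs a b}"
      using cover by blast
    then show "x \<in> \<Union>{B \<in> Bs. mate_colour H1 H2 L' B = s}"
      unfolding mate_colour_class by (intro UnionI[of "{a, b, TD_square H3 Bs a b}"]) blast+
  qed
qed

lemma mate_colour_class_disjoint:
  assumes "B \<in> Bs" "C \<in> Bs" "mate_colour H1 H2 L' B = s" "mate_colour H1 H2 L' C = s" "B \<noteq> C"
  shows "B \<inter> C = {}"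
proof -
  obtain a b where ab: "a \<in> H1" "b \<in> H2" "L' a b = s" "B = {a, b, TD_square H3 Bs a b}"
    using assms(1,3) mate_colour_class by blast
  obtain a' b' where ab': "a' \<in> H1" "b' \<in> H2" "L' a' b' = s" "C = {a', b', TD_square H3 Bs a' b'}"
    using assms(2,4) mate_colour_class by blast
  have "(a, b) \<noteq> (a', b')" using ab ab' \<open>B \<noteq> C\<close> by blast
  have "a \<noteq> a'"
  proof
    assume "a = a'"
    then have "b = b'"
      using inj_onD[OF bij_betw_imp_inj_on[OF latin_square_row[OF latin ab(1)]]] ab ab' by simp
    with \<open>a = a'\<close> \<open>(a, b) \<noteq> (a', b')\<close> show False by simp
  qed
  moreover have "b \<noteq> b'"
  proof
    assume "b = b'"
    then have "a = a'"
      using inj_onD[OF bij_betw_imp_inj_on[OF latin_square_column[OF latin ab(2)]]] ab ab' by simp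
    with \<open>b = b'\<close> \<open>(a, b) \<noteq> (a', b')\<close> show False by simp
  qed
  moreover have "TD_square H3 Bs a b \<noteq> TD_square H3 Bs a' b'"
    using orth ab ab' \<open>(a, b) \<noteq> (a', b')\<close> unfolding orthogonal_squares_def inj_on_def by auto
  ultimately show ?thesis
    using ab ab' TD_groups_disjoint TD_square_block(1)[OF ab(1,2)] TD_square_block(1)[OF ab'(1,2)]
    by blast
qed

lemma TD_mate_parallel_colouring:
  "parallel_colouring (H1 \<union> H2 \<union> H3) Bs H3 (mate_colour H1 H2 L')"
  unfolding parallel_colouring_def parallel_class_def
proof (intro conjI ballI impI)
  fix B assume "B \<in> Bs"
  then show "mate_colour H1 H2 L' B \<in> H3"
    using TD_block_eq_square mate_colour_square_block mate_symbol_in_symbols by force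
next
  fix s assume "s \<in> H3"
  show "{B \<in> Bs. mate_colour H1 H2 L' B = s} \<subseteq> Bs" by blast
  show "\<Union>{B \<in> Bs. mate_colour H1 H2 L' B = s} = H1 \<union> H2 \<union> H3"
    using \<open>s \<in> H3\<close> by (rule mate_colour_class_covers)
  fix B C assume "B \<in> {B \<in> Bs. mate_colour H1 H2 L' B = s}"
    "C \<in> {B \<in> Bs. mate_colour H1 H2 L' B = s}" "B \<noteq> C"
  then show "B \<inter> C = {}" using mate_colour_class_disjoint by blast
qed

end

end

section \<open>Gluing the resolutions along the decomposition\<close>

locale STS_decomposed =
  fixes P :: "'a set" and Bs :: "'a set set" and r T :: nat
    and G :: "nat list \<Rightarrow> 'a set" and Bx :: "nat list \<Rightarrow> 'a set set"
    and Bl :: "nat list set \<Rightarrow> 'a set set"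
  assumes decomposition: "STS_decomposition P Bs r T G Bx Bl"
begin

abbreviation pts :: "nat list set" where "pts \<equiv> ag_points (r - 1)"
abbreviation lines :: "nat list set set" where "lines \<equiv> ag_lines (r - 1)"

lemma card_group: "x \<in> pts \<Longrightarrow> card (G x) = T"
  and groups_disjoint: "x \<in> pts \<Longrightarrow> y \<in> pts \<Longrightarrow> x \<noteq> y \<Longrightarrow> G x \<inter> G y = {}"
  and UN_groups: "(\<Union>x\<in>pts. G x) = P"
  and group_STS: "x \<in> pts \<Longrightarrow> is_STS (G x) (Bx x)"
  and line_TD: "l \<in> lines \<Longrightarrow> \<exists>x y z. l = {x, y, z} \<and> x \<noteq> y \<and> x \<noteq> z \<and> y \<noteq> z \<and>
                   is_TD T (G x) (G y) (G z) (Bl l)"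
  and blocks_eq: "Bs = (\<Union>x\<in>pts. Bx x) \<union> (\<Union>l\<in>lines. Bl l)"
  using decomposition unfolding STS_decomposition_def by simp_all

lemma point_block_groups:
  assumes "x \<in> pts" "B \<in> Bx x"
  shows "{w \<in> pts. B \<inter> G w \<noteq> {}} = {x}"
proof -
  have "B \<subseteq> G x" "card B = 3" using group_STS[OF assms(1)] assms(2) unfolding is_STS_def by simp_all
  then have "B \<noteq> {}" by auto
  then show ?thesis using \<open>B \<subseteq> G x\<close> groups_disjoint assms(1) by blast
qed

lemma line_block_groups:
  assumes "l \<in> lines" "B \<in> Bl l"
  shows "{w \<in> pts. B \<inter> G w \<noteq> {}} = l"
proof -
  obtain x y z where l: "l = {x, y, z}" "x \<noteq> y" "x \<noteq> z" "y \<noteq> z"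
    and TD: "is_TD T (G x) (G y) (G z) (Bl l)"
    using line_TD[OF assms(1)] by blast
  then have xyz: "x \<in> pts" "y \<in> pts" "z \<in> pts"
    using ag_lines_subset_points[OF assms(1)] by auto
  obtain a b c where abc: "a \<in> G x" "b \<in> G y" "c \<in> G z" "B = {a, b, c}"
    using TD_block_form[OF TD assms(2)] by blast
  show ?thesis
  proof
    show "{w \<in> pts. B \<inter> G w \<noteq> {}} \<subseteq> l"
      using abc groups_disjoint xyz l(1) by blast
    show "l \<subseteq> {w \<in> pts. B \<inter> G w \<noteq> {}}"
      using abc xyz l(1) by blast
  qed
qed

lemma line_blocks_disjoint:
  "l \<in> lines \<Longrightarrow> l' \<in> lines \<Longrightarrow> l \<noteq> l' \<Longrightarrow> Bl l \<inter> Bl l' = {}"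
  using line_block_groups by blast

lemma point_line_blocks_disjoint:
  assumes "x \<in> pts" "l \<in> lines"
  shows "Bx x \<inter> Bl l = {}"
proof -
  have "l \<noteq> {x}" using line_TD[OF assms(2)] by force
  then show ?thesis using point_block_groups[OF assms(1)] line_block_groups[OF assms(2)] by blast
qed

lemma point_blocks_parallel_colouring:
  assumes resolvable: "\<forall>x\<in>pts. resolvable (G x) (Bx x)" and "T > 0"
  shows "\<exists>c. parallel_colouring P (\<Union>x\<in>pts. Bx x) {..<(T - 1) div 2} c"
proof -
  have "\<exists>c. parallel_colouring (G x) (Bx x) {..<(T - 1) div 2} c" if x: "x \<in> pts" for x
  proof -
    have "G x \<noteq> {}" using card_group[OF x] \<open>T > 0\<close> by auto
    then show ?thesis
      using resolvable_STS_parallel_colouring[OF group_STS[OF x]] resolvable x card_group[OF x]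
      by simp
  qed
  then obtain c where c: "\<And>x. x \<in> pts \<Longrightarrow> parallel_colouring (G x) (Bx x) {..<(T - 1) div 2} (c x)"
    by metis
  have nonempty: "{} \<notin> Bx x" if "x \<in> pts" for x
  proof
    assume "{} \<in> Bx x"
    then have "card ({} :: 'a set) = 3" using group_STS[OF that] unfolding is_STS_def by blast
    then show False by simp
  qed
  have "\<exists>c'. parallel_colouring (\<Union>x\<in>pts. G x) (\<Union>x\<in>pts. Bx x) {..<(T - 1) div 2} c'"
    by (rule parallel_colouring_UN_disjoint_parts[OF c groups_disjoint nonempty])
  then show ?thesis unfolding UN_groups .
qed

lemma line_blocks_parallel_colouring:
  assumes "l = {x, y, z}" and TD: "is_TD T (G x) (G y) (G z) (Bl l)"
    and mate: "has_orthogonal_mate (G x) (G y) (G z) (TD_square (G z) (Bl l))"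
  shows "\<exists>c. parallel_colouring (\<Union>w\<in>l. G w) (Bl l) {..<T} c"
proof -
  obtain L' where "latin_square (G x) (G y) (G z) L'"
    "orthogonal_squares (G x) (G y) (TD_square (G z) (Bl l)) L'"
    using mate unfolding has_orthogonal_mate_def by blast
  then have "parallel_colouring (G x \<union> G y \<union> G z) (Bl l) (G z) (mate_colour (G x) (G y) L')"
    by (rule TD_mate_parallel_colouring[OF TD])
  moreover obtain f where "bij_betw f {..<T} (G z)"
  proof -
    have "finite (G z)" "card (G z) = T" using TD unfolding is_TD_def by simp_all
    then show ?thesis using ex_bij_betw_nat_finite that by (metis lessThan_atLeast0)
  qed
  ultimately have "parallel_colouring (G x \<union> G y \<union> G z) (Bl l) {..<T}
      (inv_into {..<T} f \<circ> mate_colour (G x) (G y) L')"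
    by (rule parallel_colouring_reindex)
  moreover have "(\<Union>w\<in>l. G w) = G x \<union> G y \<union> G z"
    using \<open>l = {x, y, z}\<close> by auto
  ultimately have "parallel_colouring (\<Union>w\<in>l. G w) (Bl l) {..<T}
      (inv_into {..<T} f \<circ> mate_colour (G x) (G y) L')"
    by simp
  then show ?thesis by blast
qed

lemma lines_parallel_colouring:
  assumes mates: "\<forall>l\<in>lines. \<exists>x y z. l = {x, y, z} \<and> x \<noteq> y \<and> x \<noteq> z \<and> y \<noteq> z \<and>
           is_TD T (G x) (G y) (G z) (Bl l) \<and>
           has_orthogonal_mate (G x) (G y) (G z) (TD_square (G z) (Bl l))"
    and "l \<in> lines"
  shows "\<exists>c. parallel_colouring (\<Union>w\<in>l. G w) (Bl l) {..<T} c"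
proof -
  from bspec[OF mates \<open>l \<in> lines\<close>] obtain x y z where "l = {x, y, z}"
    "is_TD T (G x) (G y) (G z) (Bl l)"
    "has_orthogonal_mate (G x) (G y) (G z) (TD_square (G z) (Bl l))"
    by (elim exE conjE)
  then show ?thesis by (rule line_blocks_parallel_colouring)
qed

lemma parallel_line_blocks_parallel_colouring:
  assumes line_colouring: "\<And>l. l \<in> lines \<Longrightarrow> \<exists>c. parallel_colouring (\<Union>w\<in>l. G w) (Bl l) {..<T} c"
    and l0: "l0 \<in> lines"
  shows "\<exists>c. parallel_colouring P (\<Union>l\<in>ag_parallels (r - 1) l0. Bl l) {..<T} c"
proof -
  let ?C = "ag_parallels (r - 1) l0"
  have C_lines: "l \<in> lines" if "l \<in> ?C" for l
    using that ag_parallels_subset_lines by blast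
  obtain c where c: "\<And>l. l \<in> ?C \<Longrightarrow> parallel_colouring (\<Union>w\<in>l. G w) (Bl l) {..<T} (c l)"
    using line_colouring C_lines by metis
  have disjoint: "(\<Union>w\<in>l. G w) \<inter> (\<Union>w\<in>l'. G w) = {}" if "l \<in> ?C" "l' \<in> ?C" "l \<noteq> l'" for l l'
  proof -
    have "l \<inter> l' = {}" by (rule ag_parallels_disjoint[OF l0 that])
    moreover have "l \<subseteq> pts" "l' \<subseteq> pts"
      using ag_lines_subset_points C_lines that by blast+
    ultimately show ?thesis using groups_disjoint by blast
  qed
  have nonempty: "{} \<notin> Bl l" if "l \<in> ?C" for l
  proof
    assume "{} \<in> Bl l"
    then have "{w \<in> pts. {} \<inter> G w \<noteq> {}} = l" by (rule line_block_groups[OF C_lines[OF that]])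
    then have "l = {}" by simp
    then show False using line_TD[OF C_lines[OF that]] by blast
  qed
  have "(\<Union>l\<in>?C. \<Union>w\<in>l. G w) = (\<Union>w\<in>\<Union>?C. G w)" by blast
  also have "\<dots> = P" using ag_parallels_cover[OF l0] UN_groups by simp
  finally have cover: "(\<Union>l\<in>?C. \<Union>w\<in>l. G w) = P" .
  have "\<exists>c. parallel_colouring (\<Union>l\<in>?C. \<Union>w\<in>l. G w) (\<Union>l\<in>?C. Bl l) {..<T} c"
    by (rule parallel_colouring_UN_disjoint_parts[OF c disjoint nonempty])
  then show ?thesis unfolding cover .
qed

lemma parallel_classes_blocks_disjoint:
  assumes "l0 \<in> lines" "l0' \<in> lines" "ag_parallels (r - 1) l0 \<noteq> ag_parallels (r - 1) l0'"
  shows "(\<Union>l\<in>ag_parallels (r - 1) l0. Bl l) \<inter> (\<Union>l\<in>ag_parallels (r - 1) l0'. Bl l) = {}"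
proof -
  have "Bl l \<inter> Bl l' = {}" if "l \<in> ag_parallels (r - 1) l0" "l' \<in> ag_parallels (r - 1) l0'" for l l'
  proof -
    have "ag_parallels (r - 1) l = ag_parallels (r - 1) l0"
      "ag_parallels (r - 1) l' = ag_parallels (r - 1) l0'"
      using ag_parallels_eq assms(1,2) that by blast+
    then have "l \<noteq> l'" using assms(3) by metis
    moreover have "l \<in> lines" "l' \<in> lines" using that ag_parallels_subset_lines by blast+
    ultimately show ?thesis using line_blocks_disjoint by blast
  qed
  then show ?thesis by blast
qed

lemma point_parallel_blocks_disjoint:
  assumes "l0 \<in> lines"
  shows "(\<Union>x\<in>pts. Bx x) \<inter> (\<Union>l\<in>ag_parallels (r - 1) l0. Bl l) = {}"
  using point_line_blocks_disjoint ag_parallels_subset_lines by blast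

lemma UN_parallel_classes_blocks:
  "(\<Union>C\<in>ag_parallels (r - 1) ` lines. \<Union>l\<in>C. Bl l) = (\<Union>l\<in>lines. Bl l)"
proof (intro equalityI subsetI)
  fix B assume "B \<in> (\<Union>C\<in>ag_parallels (r - 1) ` lines. \<Union>l\<in>C. Bl l)"
  then obtain l0 l where "l0 \<in> lines" "l \<in> ag_parallels (r - 1) l0" "B \<in> Bl l" by blast
  moreover from this have "l \<in> lines" using ag_parallels_subset_lines by blast
  ultimately show "B \<in> (\<Union>l\<in>lines. Bl l)" by blast
next
  fix B assume "B \<in> (\<Union>l\<in>lines. Bl l)"
  then obtain l where "l \<in> lines" "B \<in> Bl l" by blast
  moreover from this have "l \<in> ag_parallels (r - 1) l" by (simp add: ag_parallels_self)
  ultimately show "B \<in> (\<Union>C\<in>ag_parallels (r - 1) ` lines. \<Union>l\<in>C. Bl l)" by blast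
qed

lemma resolvable_if_components_resolvable:
  assumes resolvable: "\<forall>x\<in>pts. resolvable (G x) (Bx x)"
    and mates: "\<forall>l\<in>lines. \<exists>x y z. l = {x, y, z} \<and> x \<noteq> y \<and> x \<noteq> z \<and> y \<noteq> z \<and>
           is_TD T (G x) (G y) (G z) (Bl l) \<and>
           has_orthogonal_mate (G x) (G y) (G z) (TD_square (G z) (Bl l))"
    and "T > 0" and "P \<noteq> {}"
  shows "resolvable P Bs"
proof -
  define A where "A = insert None (Some ` ag_parallels (r - 1) ` lines)"
  define blocks where
    "blocks a = (case a of None \<Rightarrow> \<Union>x\<in>pts. Bx x | Some C \<Rightarrow> \<Union>l\<in>C. Bl l)" for a
  define colours where
    "colours a = (case a of None \<Rightarrow> {..<(T - 1) div 2} | Some (C :: nat list set set) \<Rightarrow> {..<T})"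
    for a
  have "\<exists>c. parallel_colouring P (blocks a) (colours a) c" if "a \<in> A" for a
  proof (cases a)
    case None
    then show ?thesis
      using point_blocks_parallel_colouring[OF resolvable \<open>T > 0\<close>]
      by (simp add: blocks_def colours_def)
  next
    case (Some C)
    then obtain l0 where "l0 \<in> lines" "C = ag_parallels (r - 1) l0"
      using \<open>a \<in> A\<close> unfolding A_def by blast
    then show ?thesis
      using parallel_line_blocks_parallel_colouring[OF lines_parallel_colouring[OF mates]] Some
      by (simp add: blocks_def colours_def)
  qed
  then obtain c where c: "\<And>a. a \<in> A \<Longrightarrow> parallel_colouring P (blocks a) (colours a) (c a)"
    by metis
  have disjoint: "blocks a \<inter> blocks b = {}" if "a \<in> A" "b \<in> A" "a \<noteq> b" for a b
  proof (cases a; cases b)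
    fix C C' assume "a = Some C" "b = Some C'"
    then show ?thesis
      using that parallel_classes_blocks_disjoint unfolding A_def blocks_def by auto
  qed (use that point_parallel_blocks_disjoint in \<open>auto simp: A_def blocks_def\<close>)
  have "(\<Union>a\<in>A. blocks a) = Bs"
    using UN_parallel_classes_blocks blocks_eq unfolding A_def blocks_def by simp
  moreover have "\<exists>c'. parallel_colouring P (\<Union>a\<in>A. blocks a) (SIGMA a:A. colours a) c'"
    by (rule parallel_colouring_UN_disjoint_blocks[OF c disjoint])
  ultimately obtain c' where "parallel_colouring P Bs (SIGMA a:A. colours a) c'"
    by auto
  then show ?thesis
    using resolution_of_parallel_colouring[OF _ \<open>P \<noteq> {}\<close>] unfolding resolvable_def by blast
qed

end

theorem theorem3p7:
  fixes k r :: nat and P :: "'a set" and Bs :: "'a set set"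
    and G :: "nat list \<Rightarrow> 'a set" and Bx :: "nat list \<Rightarrow> 'a set set"
    and Bl :: "nat list set \<Rightarrow> 'a set set"
  assumes "k \<ge> 2" and "2 \<le> r" and "r \<le> k"
    and "is_STS P Bs" and "card P = 3 ^ k"
    and "three_rank P Bs \<le> 3 ^ k - r"
    and "STS_decomposition P Bs r (3 ^ (k - r + 1)) G Bx Bl"
    and "\<forall>x\<in>ag_points (r - 1). resolvable (G x) (Bx x)"
    and "\<forall>l\<in>ag_lines (r - 1). \<exists>x y z. l = {x, y, z} \<and> x \<noteq> y \<and> x \<noteq> z \<and> y \<noteq> z \<and>
           is_TD (3 ^ (k - r + 1)) (G x) (G y) (G z) (Bl l) \<and>
           has_orthogonal_mate (G x) (G y) (G z) (TD_square (G z) (Bl l))"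
  shows "resolvable P Bs \<and>
         (\<exists>R. is_resolution P Bs R \<and> card R = (3 ^ k - 1) div 2)"
proof -
  \<comment> \<open>the rank bound and the ranges of k and r only serve to make the decomposition exist\<close>
  interpret STS_decomposed P Bs r "3 ^ (k - r + 1)" G Bx Bl
    by unfold_locales (rule assms(7))
  have "P \<noteq> {}" using assms(5) by auto
  have "resolvable P Bs"
    using resolvable_if_components_resolvable[OF assms(8,9)] \<open>P \<noteq> {}\<close> by simp
  moreover obtain R where R: "is_resolution P Bs R"
    using \<open>resolvable P Bs\<close> unfolding resolvable_def by blast
  moreover have "card R = (3 ^ k - 1) div 2"
    using STS_resolution_card[OF assms(4) R \<open>P \<noteq> {}\<close>] assms(5) by simp
  ultimately show ?thesis by blast
qed

end
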